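(* Let $F$ be a field of characteristic $0$ and let $b_1,\dots,b_n$ be indeterminates. Then in the field $F(b_1,\dots,b_n)$ of rational functions, \[\sum_{\sigma\in S_n}\frac{\operatorname{sgn}(\sigma)}{b_{\sigma(1)}(b_{\sigma(1)}+b_{\sigma(2)})\cdots(b_{\sigma(1)}+\cdots+b_{\sigma(n)})}=2^n\frac{\prod_{1\le i<j\le n}(b_j-b_i)}{\prod_{1\le i\le j\le n}(b_i+b_j)},\] where $S_n$ is the symmetric group on $n$ letters. *)

theory Defs
  imports "HOL-Combinatorics.Permutations"
begin

end

theory Submission
  imports Defs
begin

text \<open>
  A permutation \<sigma> of {1..n+1} factors as \<sigma> = c \<circ> \<tau>, where m = \<sigma>(n+1),
  \<tau> permutes {1..n} and c is the cycle sending n+1 to m, of sign (-1)^(n+1-m). As the last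
  partial sum is always the total b_1 + ... + b_(n+1), the left side L satisfies
    (b_1 + ... + b_(n+1)) L_(n+1)(b) = \<Sum>_m (-1)^(n+1-m) L_n(b with b_m deleted).
  For distinct b_i, deleting b_m multiplies the right side G by
  (-1)^(n+1-m) b_m \<Prod>_(j\<noteq>m) (b_m + b_j)/(b_m - b_j), so G satisfies the same recursion thanks to
  the identity \<Sum>_m b_m \<Prod>_(j\<noteq>m) (b_m + b_j)/(b_m - b_j) = \<Sum>_m b_m, which is read off from
  the partial fraction expansion of \<Prod>_j (t + b_j)/(t - b_j). If two b_i coincide, both sides
  vanish: L is antisymmetric under swapping them, and G contains a Vandermonde factor.
\<close>

text \<open>Half the residue at \<open>t = x\<close> of \<open>\<Prod>y\<in>X. (t+y)/(t-y)\<close>.\<close>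

definition prod_ratio_coeff :: "'a::field set \<Rightarrow> 'a \<Rightarrow> 'a" where
  "prod_ratio_coeff X x = x * (\<Prod>y\<in>X-{x}. (x+y)/(x-y))"

lemma prod_ratio_coeff_insert:
  assumes "finite X" "a \<notin> X" "x \<in> X"
  shows "prod_ratio_coeff (insert a X) x = prod_ratio_coeff X x * ((x+a)/(x-a))"
proof -
  have "insert a X - {x} = insert a (X - {x})" using assms by auto
  then show ?thesis using assms unfolding prod_ratio_coeff_def by (simp add: mult_ac)
qed

lemma prod_ratio_coeff_insert_self:
  "a \<notin> X \<Longrightarrow> prod_ratio_coeff (insert a X) a = a * (\<Prod>y\<in>X. (a+y)/(a-y))"
  unfolding prod_ratio_coeff_def by (metis Diff_insert_absorb)

lemma prod_ratio_partial_fractions: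
  fixes X :: "'a::field set"
  assumes "finite X" "t \<notin> X"
  shows "(\<Prod>y\<in>X. (t+y)/(t-y)) = 1 + (\<Sum>x\<in>X. 2 * prod_ratio_coeff X x / (t - x))"
  using assms
proof (induction X arbitrary: t rule: finite_induct)
  case empty
  then show ?case by simp
next
  case (insert a X)
  let ?c = "prod_ratio_coeff X" and ?c' = "prod_ratio_coeff (insert a X)" and ?u = "2*a/(t-a)"
  have "t - a \<noteq> 0" using insert.prems by auto
  have coeff_new: "?c' a = a * (1 + (\<Sum>x\<in>X. 2 * ?c x / (a - x)))"
    using insert.IH[of a] insert.hyps by (simp add: prod_ratio_coeff_insert_self)
  have summand: "(1 + ?u) * (2 * ?c x / (t - x))
      = 2 * a * (2 * ?c x / (a - x)) / (t-a) + 2 * ?c' x / (t - x)" if "x \<in> X" for x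
  proof -
    have "x - a \<noteq> 0" "a - x \<noteq> 0" "t - x \<noteq> 0"
      using that insert.hyps insert.prems by auto
    with \<open>t - a \<noteq> 0\<close> show ?thesis unfolding prod_ratio_coeff_insert[OF insert.hyps that]
      by (simp add: divide_simps) (simp add: algebra_simps)
  qed
  have "(t+a)/(t-a) = 1 + ?u"
    using \<open>t - a \<noteq> 0\<close> by (simp add: field_simps)
  moreover have "(\<Prod>y\<in>X. (t+y)/(t-y)) = 1 + (\<Sum>x\<in>X. 2 * ?c x / (t - x))"
    using insert.IH insert.prems by simp
  ultimately have "(\<Prod>y\<in>insert a X. (t+y)/(t-y))
      = (1 + ?u) * (1 + (\<Sum>x\<in>X. 2 * ?c x / (t - x)))"
    using insert.hyps by simp
  also have "\<dots> = 1 + ?u + (\<Sum>x\<in>X. (1 + ?u) * (2 * ?c x / (t - x)))"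
    by (simp only: distrib_left mult_1_right sum_distrib_left)
  also have "(\<Sum>x\<in>X. (1 + ?u) * (2 * ?c x / (t - x)))
      = (\<Sum>x\<in>X. 2 * a * (2 * ?c x / (a - x)) / (t-a)) + (\<Sum>x\<in>X. 2 * ?c' x / (t - x))"
    unfolding sum.distrib[symmetric] by (rule sum.cong[OF refl]) (rule summand)
  also have "1 + ?u + ((\<Sum>x\<in>X. 2 * a * (2 * ?c x / (a - x)) / (t-a)) + (\<Sum>x\<in>X. 2 * ?c' x / (t - x)))
      = 1 + 2 * ?c' a / (t-a) + (\<Sum>x\<in>X. 2 * ?c' x / (t - x))"
  proof -
    have new_pole: "?u + (\<Sum>x\<in>X. 2 * a * (2 * ?c x / (a - x)) / (t-a)) = 2 * ?c' a / (t-a)"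
      unfolding coeff_new by (simp add: add_divide_distrib sum_divide_distrib sum_distrib_left algebra_simps)
    show ?thesis unfolding new_pole[symmetric] by (simp only: add_ac)
  qed
  finally show ?case using insert.hyps by simp
qed

lemma sum_prod_ratio_coeffs:
  fixes X :: "'a::field set"
  assumes "finite X"
  shows "(\<Sum>x\<in>X. prod_ratio_coeff X x) = \<Sum>X"
  using assms
proof (induction X rule: finite_induct)
  case empty
  then show ?case by simp
next
  case (insert a X)
  let ?c = "prod_ratio_coeff X" and ?c' = "prod_ratio_coeff (insert a X)"
  have coeff_new: "?c' a = a + (\<Sum>x\<in>X. 2 * a * (?c x / (a - x)))"
    using prod_ratio_partial_fractions[OF insert.hyps] insert.hyps
    by (simp add: prod_ratio_coeff_insert_self distrib_left sum_distrib_left mult_ac)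
  have telescope: "2 * a * (?c x / (a - x)) + ?c x * ((x+a)/(x-a)) = ?c x" if "x \<in> X" for x
  proof -
    have "a - x \<noteq> 0" "x - a \<noteq> 0" using that insert.hyps by auto
    then show ?thesis by (simp add: divide_simps) (simp add: algebra_simps)
  qed
  have "(\<Sum>x\<in>insert a X. ?c' x) = ?c' a + (\<Sum>x\<in>X. ?c x * ((x+a)/(x-a)))"
    using insert.hyps by (simp add: prod_ratio_coeff_insert)
  also have "\<dots> = a + (\<Sum>x\<in>X. ?c x)"
    unfolding coeff_new using telescope by (simp add: sum.distrib[symmetric])
  finally show ?case using insert by simp
qed

lemma sum_weighted_prod_ratio:
  fixes b :: "'b \<Rightarrow> 'a::field"
  assumes "finite A" "inj_on b A"
  shows "(\<Sum>m\<in>A. b m * (\<Prod>j\<in>A-{m}. (b m + b j)/(b m - b j))) = (\<Sum>m\<in>A. b m)"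
proof -
  have "b m * (\<Prod>j\<in>A-{m}. (b m + b j)/(b m - b j)) = prod_ratio_coeff (b ` A) (b m)"
    if "m \<in> A" for m
  proof -
    have "b ` A - {b m} = b ` (A - {m})" using assms that by (auto simp: inj_on_def)
    moreover have "inj_on b (A - {m})" using assms by (auto intro: inj_on_subset)
    ultimately show ?thesis by (simp add: prod_ratio_coeff_def prod.reindex)
  qed
  then have "(\<Sum>m\<in>A. b m * (\<Prod>j\<in>A-{m}. (b m + b j)/(b m - b j)))
      = (\<Sum>x\<in>b ` A. prod_ratio_coeff (b ` A) x)"
    using assms by (simp add: sum.reindex)
  also have "\<dots> = (\<Sum>m\<in>A. b m)"
    using assms sum_prod_ratio_coeffs[of "b ` A"] by (simp add: sum.reindex)
  finally show ?thesis .
qed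

definition skip :: "nat \<Rightarrow> nat \<Rightarrow> nat" where
  "skip m i = (if i < m then i else Suc i)"

lemma strict_mono_skip: "strict_mono (skip m)"
  by (auto simp: strict_mono_def skip_def)

lemma skip_image:
  assumes "m \<in> {1..Suc n}"
  shows "skip m ` {1..n} = {1..Suc n} - {m}"
proof
  show "skip m ` {1..n} \<subseteq> {1..Suc n} - {m}" by (auto simp: skip_def)
  show "{1..Suc n} - {m} \<subseteq> skip m ` {1..n}"
  proof
    fix j assume j: "j \<in> {1..Suc n} - {m}"
    show "j \<in> skip m ` {1..n}"
    proof (cases "j < m")
      case True
      then show ?thesis using j assms by (intro image_eqI[of _ _ j]) (auto simp: skip_def)
    next
      case False
      then show ?thesis using j assms by (intro image_eqI[of _ _ "j - 1"]) (auto simp: skip_def)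
    qed
  qed
qed

lemma prod_pairs_skip:
  fixes f :: "nat \<Rightarrow> nat \<Rightarrow> 'a::comm_monoid_mult" and R :: "nat \<Rightarrow> nat \<Rightarrow> bool"
  assumes m: "m \<in> {1..Suc n}" and R: "\<And>i j. R (skip m i) (skip m j) \<longleftrightarrow> R i j"
  shows "(\<Prod>i=1..Suc n. \<Prod>j\<in>{j\<in>{1..Suc n}. R i j}. f i j) =
     (\<Prod>i=1..n. \<Prod>j\<in>{j\<in>{1..n}. R i j}. f (skip m i) (skip m j)) *
     (\<Prod>i\<in>{i\<in>{1..Suc n}-{m}. R i m}. f i m) * (\<Prod>j\<in>{j\<in>{1..Suc n}. R m j}. f m j)"
proof -
  let ?pairs = "\<lambda>N. SIGMA i:{1..N}. {j\<in>{1..N}. R i j}"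
  let ?T1 = "{p\<in>?pairs (Suc n). fst p \<noteq> m \<and> snd p \<noteq> m}"
  let ?T2 = "{i\<in>{1..Suc n}-{m}. R i m} \<times> {m}"
  let ?T3 = "{m} \<times> {j\<in>{1..Suc n}. R m j}"
  have "(\<Prod>i=1..Suc n. \<Prod>j\<in>{j\<in>{1..Suc n}. R i j}. f i j) = prod (case_prod f) (?pairs (Suc n))"
    by (rule prod.Sigma) auto
  also have "?pairs (Suc n) = (?T1 \<union> ?T2) \<union> ?T3" using m by auto
  also have "prod (case_prod f) \<dots> = prod (case_prod f) ?T1 * prod (case_prod f) ?T2 * prod (case_prod f) ?T3"
    by (subst prod.union_disjoint; (subst prod.union_disjoint)?) auto
  also have "?T1 = map_prod (skip m) (skip m) ` ?pairs n"
  proof (intro set_eqI iffI)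
    fix p assume "p \<in> ?T1"
    then obtain i j where p: "p = (i, j)" "i \<in> {1..Suc n} - {m}" "j \<in> {1..Suc n} - {m}" "R i j"
      by auto
    then obtain i' j' where "i = skip m i'" "j = skip m j'" "i' \<in> {1..n}" "j' \<in> {1..n}"
      unfolding skip_image[OF m, symmetric] by blast
    with p R show "p \<in> map_prod (skip m) (skip m) ` ?pairs n" by force
  next
    fix p assume "p \<in> map_prod (skip m) (skip m) ` ?pairs n"
    then obtain i j where "p = (skip m i, skip m j)" "i \<in> {1..n}" "j \<in> {1..n}" "R i j" by auto
    with R skip_image[OF m] show "p \<in> ?T1" by fastforce
  qed
  also have "prod (case_prod f) \<dots> = (\<Prod>i=1..n. \<Prod>j\<in>{j\<in>{1..n}. R i j}. f (skip m i) (skip m j))"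
  proof -
    have "inj (map_prod (skip m) (skip m))"
      by (auto simp: inj_def strict_mono_eq[OF strict_mono_skip])
    then show ?thesis
      by (simp add: prod.reindex inj_on_subset prod.Sigma[symmetric] case_prod_map_prod o_def)
  qed
  finally show ?thesis by (simp add: prod.Sigma[symmetric])
qed

lemma prod_remove_split:
  fixes m N :: nat
  assumes "m \<in> {1..N}"
  shows "(\<Prod>j\<in>{1..N}-{m}. g j) = (\<Prod>i\<in>{1..<m}. g i) * (\<Prod>j\<in>{m<..N}. g j)"
proof -
  have "{1..N}-{m} = {1..<m} \<union> {m<..N}" using assms by auto
  moreover have "{1..<m} \<inter> {m<..N} = {}" by auto
  ultimately show ?thesis by (simp add: prod.union_disjoint)
qed

definition vandermonde :: "nat \<Rightarrow> (nat \<Rightarrow> 'a::comm_ring_1) \<Rightarrow> 'a" where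
  "vandermonde n b = (\<Prod>i=1..n. \<Prod>j\<in>{i<..n}. b j - b i)"

definition pair_sums_prod :: "nat \<Rightarrow> (nat \<Rightarrow> 'a::comm_semiring_1) \<Rightarrow> 'a" where
  "pair_sums_prod n b = (\<Prod>i=1..n. \<Prod>j=i..n. b i + b j)"

lemma vandermonde_Suc:
  fixes b :: "nat \<Rightarrow> 'a::comm_ring_1"
  assumes m: "m \<in> {1..Suc n}"
  shows "vandermonde (Suc n) b
    = (-1) ^ (Suc n - m) * vandermonde n (b \<circ> skip m) * (\<Prod>j\<in>{1..Suc n}-{m}. b m - b j)"
proof -
  have greater: "{j\<in>{1..N}. i < j} = {i<..N}" for i N :: nat by auto
  have "vandermonde (Suc n) b = (\<Prod>i=1..n. \<Prod>j\<in>{i<..n}. b (skip m j) - b (skip m i)) *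
      (\<Prod>i\<in>{i\<in>{1..Suc n}-{m}. i < m}. b m - b i) * (\<Prod>j\<in>{m<..Suc n}. b j - b m)"
    unfolding vandermonde_def
    by (rule prod_pairs_skip[OF m, where f="\<lambda>i j. b j - b i" and R="(<)", unfolded greater])
      (rule strict_mono_less[OF strict_mono_skip])
  also have "{i\<in>{1..Suc n}-{m}. i < m} = {1..<m}" using m by auto
  also have "(\<Prod>j\<in>{m<..Suc n}. b j - b m) = (-1) ^ (Suc n - m) * (\<Prod>j\<in>{m<..Suc n}. b m - b j)"
    using prod_uminus[of "\<lambda>j. b m - b j" "{m<..Suc n}"] by simp
  also have "(\<Prod>i=1..n. \<Prod>j\<in>{i<..n}. b (skip m j) - b (skip m i)) = vandermonde n (b \<circ> skip m)"
    by (simp add: vandermonde_def)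
  finally show ?thesis unfolding prod_remove_split[OF m] by (simp add: mult_ac)
qed

lemma pair_sums_prod_Suc:
  fixes b :: "nat \<Rightarrow> 'a::comm_semiring_1"
  assumes m: "m \<in> {1..Suc n}"
  shows "pair_sums_prod (Suc n) b
    = pair_sums_prod n (b \<circ> skip m) * (2 * b m) * (\<Prod>j\<in>{1..Suc n}-{m}. b m + b j)"
proof -
  have at_least: "(\<Prod>i=1..N. \<Prod>j\<in>{j\<in>{1..N}. i \<le> j}. g i j) = (\<Prod>i=1..N. \<Prod>j=i..N. g i j)"
    for N :: nat and g :: "nat \<Rightarrow> nat \<Rightarrow> 'a"
    by (rule prod.cong) (auto intro: prod.cong)
  have "pair_sums_prod (Suc n) b = (\<Prod>i=1..n. \<Prod>j=i..n. b (skip m i) + b (skip m j)) *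
      (\<Prod>i\<in>{i\<in>{1..Suc n}-{m}. i \<le> m}. b i + b m) * (\<Prod>j\<in>{j\<in>{1..Suc n}. m \<le> j}. b m + b j)"
    unfolding pair_sums_prod_def
    by (rule prod_pairs_skip[OF m, where f="\<lambda>i j. b i + b j" and R="(\<le>)", unfolded at_least])
      (rule strict_mono_less_eq[OF strict_mono_skip])
  also have "{i\<in>{1..Suc n}-{m}. i \<le> m} = {1..<m}" using m by auto
  also have "{j\<in>{1..Suc n}. m \<le> j} = insert m {m<..Suc n}" using m by auto
  also have "(\<Prod>j\<in>insert m {m<..Suc n}. b m + b j) = 2 * b m * (\<Prod>j\<in>{m<..Suc n}. b m + b j)"
    by (simp add: mult_2)
  also have "(\<Prod>i\<in>{1..<m}. b i + b m) = (\<Prod>i\<in>{1..<m}. b m + b i)"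
    by (simp add: add.commute)
  also have "(\<Prod>i=1..n. \<Prod>j=i..n. b (skip m i) + b (skip m j)) = pair_sums_prod n (b \<circ> skip m)"
    by (simp add: pair_sums_prod_def)
  finally show ?thesis unfolding prod_remove_split[OF m] by (simp only: mult_ac)
qed

definition closed_form :: "nat \<Rightarrow> (nat \<Rightarrow> 'a::field) \<Rightarrow> 'a" where
  "closed_form n b = 2 ^ n * vandermonde n b / pair_sums_prod n b"

definition nonvanishing_subsums :: "nat \<Rightarrow> (nat \<Rightarrow> 'a::comm_monoid_add) \<Rightarrow> bool" where
  "nonvanishing_subsums n b \<longleftrightarrow> (\<forall>S. S \<subseteq> {1..n} \<longrightarrow> S \<noteq> {} \<longrightarrow> sum b S \<noteq> 0)"

lemma nonvanishing_subsums_single: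
  "nonvanishing_subsums n b \<Longrightarrow> i \<in> {1..n} \<Longrightarrow> b i \<noteq> 0"
  unfolding nonvanishing_subsums_def by (drule spec[of _ "{i}"]) auto

lemma nonvanishing_subsums_pair:
  "nonvanishing_subsums n b \<Longrightarrow> i \<in> {1..n} \<Longrightarrow> j \<in> {1..n} \<Longrightarrow> i \<noteq> j \<Longrightarrow> b i + b j \<noteq> 0"
  unfolding nonvanishing_subsums_def by (drule spec[of _ "{i, j}"]) auto

lemma nonvanishing_subsums_skip:
  assumes "nonvanishing_subsums (Suc n) b" "m \<in> {1..Suc n}"
  shows "nonvanishing_subsums n (b \<circ> skip m)"
  unfolding nonvanishing_subsums_def
proof (intro allI impI)
  fix S assume S: "S \<subseteq> {1..n}" "S \<noteq> {}"
  have "sum (b \<circ> skip m) S = sum b (skip m ` S)"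
    by (simp add: sum.reindex strict_mono_imp_inj_on[OF strict_mono_skip] inj_on_subset)
  moreover have "skip m ` S \<subseteq> {1..Suc n}" using S skip_image[OF assms(2)] by blast
  ultimately show "sum (b \<circ> skip m) S \<noteq> 0"
    using assms(1) S(2) unfolding nonvanishing_subsums_def by auto
qed

lemma pair_sums_prod_nonzero:
  fixes b :: "nat \<Rightarrow> 'a::{idom,ring_char_0}"
  assumes "nonvanishing_subsums n b"
  shows "pair_sums_prod n b \<noteq> 0"
  unfolding pair_sums_prod_def prod_zero_iff[OF finite_atLeastAtMost]
proof safe
  fix i j assume ij: "i \<in> {1..n}" "j \<in> {i..n}" "b i + b j = 0"
  show False
  proof (cases "i = j")
    case True
    then show False using ij nonvanishing_subsums_single[OF assms ij(1)] by (simp flip: mult_2)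
  next
    case False
    then show False using ij nonvanishing_subsums_pair[OF assms ij(1), of j] by auto
  qed
qed

lemma closed_form_Suc:
  fixes b :: "nat \<Rightarrow> 'a::field_char_0"
  assumes inj: "inj_on b {1..Suc n}" and nv: "nonvanishing_subsums (Suc n) b"
  shows "(\<Sum>m=1..Suc n. (-1) ^ (Suc n - m) * closed_form n (b \<circ> skip m))
    = (\<Sum>i=1..Suc n. b i) * closed_form (Suc n) b"
proof -
  have summand: "(-1) ^ (Suc n - m) * closed_form n (b \<circ> skip m)
      = closed_form (Suc n) b * (b m * (\<Prod>j\<in>{1..Suc n}-{m}. (b m + b j) / (b m - b j)))"
    if m: "m \<in> {1..Suc n}" for m
  proof -
    define s :: 'a where "s = (-1) ^ (Suc n - m)"
    define P where "P = (\<Prod>j\<in>{1..Suc n}-{m}. b m - b j)"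
    define Q where "Q = (\<Prod>j\<in>{1..Suc n}-{m}. b m + b j)"
    have "s * s = 1" unfolding s_def by (simp flip: power_mult_distrib)
    moreover have "P \<noteq> 0" unfolding P_def using inj m by (auto simp: inj_on_def)
    moreover have "Q \<noteq> 0" unfolding Q_def using nonvanishing_subsums_pair[OF nv m] by auto
    moreover have "b m \<noteq> 0" using nonvanishing_subsums_single[OF nv m] .
    moreover have "pair_sums_prod n (b \<circ> skip m) \<noteq> 0"
      using pair_sums_prod_nonzero[OF nonvanishing_subsums_skip[OF nv m]] .
    moreover have "(\<Prod>j\<in>{1..Suc n}-{m}. (b m + b j) / (b m - b j)) = Q / P"
      unfolding P_def Q_def by (rule prod_dividef)
    ultimately show ?thesis
      unfolding closed_form_def vandermonde_Suc[OF m] pair_sums_prod_Suc[OF m]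
        s_def[symmetric] P_def[symmetric] Q_def[symmetric]
      by (simp add: field_simps)
  qed
  have "(\<Sum>m=1..Suc n. (-1) ^ (Suc n - m) * closed_form n (b \<circ> skip m))
      = closed_form (Suc n) b * (\<Sum>m=1..Suc n. b m * (\<Prod>j\<in>{1..Suc n}-{m}. (b m + b j) / (b m - b j)))"
    unfolding sum_distrib_left by (intro sum.cong refl summand)
  also have "\<dots> = closed_form (Suc n) b * (\<Sum>i=1..Suc n. b i)"
    using sum_weighted_prod_ratio[OF _ inj] by simp
  finally show ?thesis by (simp only: mult.commute)
qed

definition move_last :: "nat \<Rightarrow> nat \<Rightarrow> nat \<Rightarrow> nat" where
  "move_last n m i = (if i < n then skip m i else if i = n then m else i)"

lemma move_last_self: "move_last n n = id"
  by (auto simp: fun_eq_iff move_last_def skip_def)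

lemma move_last_step: "m < n \<Longrightarrow> move_last n m = transpose m (Suc m) \<circ> move_last n (Suc m)"
  by (auto simp: fun_eq_iff move_last_def skip_def transpose_def)

lemma move_last_permutes:
  assumes "m \<in> {1..n}"
  shows "move_last n m permutes {1..n}"
proof -
  from assms have "m \<le> n" by simp
  then show ?thesis
  proof (induction m rule: inc_induct)
    case base
    show ?case unfolding move_last_self by (rule permutes_id)
  next
    case (step k)
    then show ?case
      using assms unfolding move_last_step[OF step.hyps(2)]
      by (intro permutes_compose permutes_swap_id) auto
  qed
qed

lemma sign_move_last:
  assumes "m \<in> {1..n}"
  shows "sign (move_last n m) = (-1) ^ (n - m)"
proof -
  from assms have "m \<le> n" by simp
  then show ?thesis
  proof (induction m rule: inc_induct)
    case base
    show ?case by (simp add: move_last_self)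
  next
    case (step k)
    have "permutation (move_last n (Suc k))"
      using assms step.hyps by (intro permutes_imp_permutation[OF _ move_last_permutes]) auto
    then have "sign (move_last n k) = - sign (move_last n (Suc k))"
      by (simp add: move_last_step[OF step.hyps(2)] sign_compose[OF permutation_swap_id] sign_swap_id)
    moreover have "n - k = Suc (n - Suc k)" using step.hyps by simp
    ultimately show ?case using step.IH by simp
  qed
qed

lemma sum_permutations_Suc:
  "(\<Sum>\<sigma>\<in>{\<sigma>. \<sigma> permutes {1..Suc n}}. g \<sigma>)
    = (\<Sum>m=1..Suc n. \<Sum>\<tau>\<in>{\<tau>. \<tau> permutes {1..n}}. g (move_last (Suc n) m \<circ> \<tau>))"
proof -
  have "(\<Sum>\<tau>\<in>{\<tau>. \<tau> permutes {1..n}}. g (transpose (Suc n) m \<circ> \<tau>))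
      = (\<Sum>\<tau>\<in>{\<tau>. \<tau> permutes {1..n}}. g (move_last (Suc n) m \<circ> \<tau>))"
    if m: "m \<in> {1..Suc n}" for m
  proof -
    let ?\<alpha> = "transpose (Suc n) m \<circ> move_last (Suc n) m"
    have "?\<alpha> permutes {1..Suc n}"
      using m by (intro permutes_compose move_last_permutes permutes_swap_id) auto
    then have "?\<alpha> permutes {1..n}"
      by (rule permutes_superset) (auto simp: move_last_def)
    then show ?thesis
      by (subst setum_permutations_compose_left[of ?\<alpha>]) (simp_all add: o_assoc)
  qed
  moreover have "{1..Suc n} = insert (Suc n) {1..n}" by auto
  ultimately show ?thesis
    by (simp add: sum_over_permutations_insert move_last_self)
qed

definition signed_perm_sum :: "nat \<Rightarrow> (nat \<Rightarrow> 'a::field) \<Rightarrow> 'a" where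
  "signed_perm_sum n b = (\<Sum>\<sigma>\<in>{\<sigma>. \<sigma> permutes {1..n}}.
     of_int (sign \<sigma>) / (\<Prod>k=1..n. \<Sum>i=1..k. b (\<sigma> i)))"

lemma prod_partial_sums_move_last:
  assumes \<tau>: "\<tau> permutes {1..n}" and m: "m \<in> {1..Suc n}"
  shows "(\<Prod>k=1..Suc n. \<Sum>i=1..k. b ((move_last (Suc n) m \<circ> \<tau>) i))
    = (\<Prod>k=1..n. \<Sum>i=1..k. (b \<circ> skip m) (\<tau> i)) * (\<Sum>i=1..Suc n. b i)"
proof -
  have \<sigma>: "move_last (Suc n) m \<circ> \<tau> permutes {1..Suc n}"
    using \<tau> m by (intro permutes_compose move_last_permutes permutes_subset[OF \<tau>]) auto
  have "(\<Sum>i=1..k. b ((move_last (Suc n) m \<circ> \<tau>) i)) = (\<Sum>i=1..k. (b \<circ> skip m) (\<tau> i))"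
    if "k \<in> {1..n}" for k
  proof (rule sum.cong[OF refl])
    fix i assume "i \<in> {1..k}"
    then have "\<tau> i \<in> {1..n}" using that permutes_in_image[OF \<tau>] by auto
    then show "b ((move_last (Suc n) m \<circ> \<tau>) i) = (b \<circ> skip m) (\<tau> i)"
      by (simp add: move_last_def)
  qed
  then have "(\<Prod>k=1..n. \<Sum>i=1..k. b ((move_last (Suc n) m \<circ> \<tau>) i))
      = (\<Prod>k=1..n. \<Sum>i=1..k. (b \<circ> skip m) (\<tau> i))"
    by (rule prod.cong[OF refl])
  moreover have "(\<Sum>i=1..Suc n. b ((move_last (Suc n) m \<circ> \<tau>) i)) = (\<Sum>i=1..Suc n. b i)"
    using sum.permute[OF \<sigma>, of b] by (simp add: o_def)
  ultimately show ?thesis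
    by (simp only: prod.nat_ivl_Suc'[of 1] le_SucI mult.commute)
qed

lemma signed_perm_sum_Suc:
  fixes b :: "nat \<Rightarrow> 'a::field"
  shows "signed_perm_sum (Suc n) b
    = (\<Sum>m=1..Suc n. (-1) ^ (Suc n - m) * signed_perm_sum n (b \<circ> skip m)) / (\<Sum>i=1..Suc n. b i)"
proof -
  let ?S = "\<Sum>i=1..Suc n. b i"
  have "of_int (sign (move_last (Suc n) m \<circ> \<tau>))
        / (\<Prod>k=1..Suc n. \<Sum>i=1..k. b ((move_last (Suc n) m \<circ> \<tau>) i))
      = (-1) ^ (Suc n - m) * (of_int (sign \<tau>) / (\<Prod>k=1..n. \<Sum>i=1..k. (b \<circ> skip m) (\<tau> i))) / ?S"
    if m: "m \<in> {1..Suc n}" and \<tau>: "\<tau> permutes {1..n}" for m \<tau>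
  proof -
    have "permutation \<tau>" "permutation (move_last (Suc n) m)"
      by (rule permutes_imp_permutation[OF _ \<tau>], simp)
        (rule permutes_imp_permutation[OF _ move_last_permutes[OF m]], simp)
    then have "sign (move_last (Suc n) m \<circ> \<tau>) = (-1) ^ (Suc n - m) * sign \<tau>"
      by (simp add: sign_compose sign_move_last[OF m])
    then show ?thesis unfolding prod_partial_sums_move_last[OF \<tau> m]
      by (simp add: of_int_mult)
  qed
  then have "signed_perm_sum (Suc n) b = (\<Sum>m=1..Suc n. \<Sum>\<tau>\<in>{\<tau>. \<tau> permutes {1..n}}.
      (-1) ^ (Suc n - m) * (of_int (sign \<tau>) / (\<Prod>k=1..n. \<Sum>i=1..k. (b \<circ> skip m) (\<tau> i))) / ?S)"
    unfolding signed_perm_sum_def sum_permutations_Suc by (intro sum.cong refl) auto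
  also have "\<dots> = (\<Sum>m=1..Suc n. (-1) ^ (Suc n - m) * signed_perm_sum n (b \<circ> skip m) / ?S)"
    unfolding signed_perm_sum_def sum_distrib_left sum_divide_distrib ..
  finally show ?thesis by (simp only: sum_divide_distrib)
qed

lemma signed_perm_sum_eq_closed_form:
  fixes b :: "nat \<Rightarrow> 'a::field_char_0"
  assumes "inj_on b {1..n}" "nonvanishing_subsums n b"
  shows "signed_perm_sum n b = closed_form n b"
  using assms
proof (induction n arbitrary: b)
  case 0
  then show ?case by (simp add: signed_perm_sum_def closed_form_def vandermonde_def pair_sums_prod_def)
next
  case (Suc n)
  have IH_skip: "signed_perm_sum n (b \<circ> skip m) = closed_form n (b \<circ> skip m)"
    if m: "m \<in> {1..Suc n}" for m
  proof (rule Suc.IH)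
    have "inj_on (skip m) {1..n}" "skip m ` {1..n} \<subseteq> {1..Suc n}"
      using strict_mono_imp_inj_on[OF strict_mono_skip] skip_image[OF m] by auto
    then show "inj_on (b \<circ> skip m) {1..n}"
      using Suc.prems(1) by (blast intro: comp_inj_on inj_on_subset)
    show "nonvanishing_subsums n (b \<circ> skip m)"
      by (rule nonvanishing_subsums_skip[OF Suc.prems(2) m])
  qed
  have "(\<Sum>i=1..Suc n. b i) \<noteq> 0"
    using Suc.prems(2) unfolding nonvanishing_subsums_def by auto
  moreover have "signed_perm_sum (Suc n) b
      = (\<Sum>m=1..Suc n. (-1) ^ (Suc n - m) * closed_form n (b \<circ> skip m)) / (\<Sum>i=1..Suc n. b i)"
    unfolding signed_perm_sum_Suc
    by (rule arg_cong[where f="\<lambda>x. x / (\<Sum>i=1..Suc n. b i)"], rule sum.cong[OF refl]) (simp add: IH_skip)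
  ultimately show ?case unfolding closed_form_Suc[OF Suc.prems] by simp
qed

lemma signed_perm_sum_eq_0:
  fixes b :: "nat \<Rightarrow> 'a::field_char_0"
  assumes ij: "i \<in> {1..n}" "j \<in> {1..n}" "i \<noteq> j" "b i = b j"
  shows "signed_perm_sum n b = 0"
proof -
  let ?t = "transpose i j"
  let ?f = "\<lambda>\<sigma>. of_int (sign \<sigma>) / (\<Prod>k=1..n. \<Sum>i=1..k. b (\<sigma> i)) :: 'a"
  have "signed_perm_sum n b = (\<Sum>\<sigma>\<in>{\<sigma>. \<sigma> permutes {1..n}}. ?f (?t \<circ> \<sigma>))"
    unfolding signed_perm_sum_def by (rule setum_permutations_compose_left) (rule permutes_swap_id[OF ij(1,2)])
  also have "\<dots> = (\<Sum>\<sigma>\<in>{\<sigma>. \<sigma> permutes {1..n}}. - ?f \<sigma>)"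
  proof (rule sum.cong[OF refl])
    fix \<sigma> assume "\<sigma> \<in> {\<sigma>. \<sigma> permutes {1..n}}"
    then have "permutation \<sigma>" by (auto intro: permutes_imp_permutation[of "{1..n}"])
    then have "sign (?t \<circ> \<sigma>) = - sign \<sigma>"
      using ij by (simp add: sign_compose[OF permutation_swap_id] sign_swap_id)
    moreover have "b (?t x) = b x" for x using ij by (simp add: transpose_def)
    ultimately show "?f (?t \<circ> \<sigma>) = - ?f \<sigma>" by simp
  qed
  also have "\<dots> = - signed_perm_sum n b" unfolding signed_perm_sum_def by (simp add: sum_negf)
  finally show ?thesis by simp
qed

lemma vandermonde_eq_0:
  fixes b :: "nat \<Rightarrow> 'a::idom"
  assumes "i \<in> {1..n}" "j \<in> {1..n}" "i \<noteq> j" "b i = b j"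
  shows "vandermonde n b = 0"
proof -
  have "\<exists>p\<in>{1..n}. \<exists>q\<in>{p<..n}. b q - b p = 0"
  proof (cases "i < j")
    case True
    then show ?thesis using assms by (intro bexI[of _ i] bexI[of _ j]) auto
  next
    case False
    then show ?thesis using assms by (intro bexI[of _ j] bexI[of _ i]) auto
  qed
  then show ?thesis unfolding vandermonde_def by simp
qed

theorem lemmaA5:
  fixes n :: nat and b :: "nat \<Rightarrow> 'a::field_char_0"
  assumes nondeg: "\<And>S. S \<subseteq> {1..n} \<Longrightarrow> S \<noteq> {} \<Longrightarrow> sum b S \<noteq> 0"
  shows "(\<Sum>\<sigma>\<in>{\<sigma>. \<sigma> permutes {1..n}}.
            of_int (sign \<sigma>) / (\<Prod>k=1..n. \<Sum>i=1..k. b (\<sigma> i)))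
         = 2 ^ n * (\<Prod>i=1..n. \<Prod>j\<in>{i<..n}. (b j - b i))
               / (\<Prod>i=1..n. \<Prod>j=i..n. (b i + b j))"
proof -
  have "signed_perm_sum n b = closed_form n b"
  proof (cases "inj_on b {1..n}")
    case True
    moreover have "nonvanishing_subsums n b" unfolding nonvanishing_subsums_def using nondeg by blast
    ultimately show ?thesis by (rule signed_perm_sum_eq_closed_form)
  next
    case False
    then obtain i j where "i \<in> {1..n}" "j \<in> {1..n}" "i \<noteq> j" "b i = b j"
      unfolding inj_on_def by blast
    then show ?thesis
      by (simp add: signed_perm_sum_eq_0 closed_form_def vandermonde_eq_0)
  qed
  then show ?thesis
    unfolding signed_perm_sum_def closed_form_def vandermonde_def pair_sums_prod_def .
qed

end
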